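(* The InDC-BE method with $M$ uniform quadrature nodes excluding the left-most point and $K$ correction steps is an implicit Runge–Kutta method (with $(K+1)M$ stages) which is stiffly accurate and whose coefficient matrix $A$ in the Butcher tableau is invertible. In particular, for $K=1$ (normalizing the time step to $1$), $$A=\begin{pmatrix}T&Z\\P&T\end{pmatrix},$$ where $Z$ is the $M\times M$ zero matrix, $T$ is the $M\times M$ matrix with $T_{ij}=1/M$ for $j\le i$ and $T_{ij}=0$ for $j>i$, and $P_{ij}=\tilde S_{ij}-\frac1M$ for $j\le i$, $P_{ij}=\tilde S_{ij}$ for $j>i$.
   Context: InDC-BE for an ODE $y'=f(y)$ over one step of size $H$: nodes $\tau_m=t_n+mh$, $h=H/M$; $\alpha_j$ ($j=1,\dots,M$) the Lagrange basis polynomials of degree $M-1$ for $\tau_1,\dots,\tau_M$; $S^m(\bar w)=\frac1h\sum_jw_j\int_{\tau_m}^{\tau_{m+1}}\alpha_j$. Prediction: $y^{(0)}_{m+1}=y^{(0)}_m+hf(y^{(0)}_{m+1})$; correction: $y^{(k)}_{m+1}=y^{(k)}_m+h[f(y^{(k)}_{m+1})-f(y^{(k-1)}_{m+1})]+hS^m((f(y^{(k-1)}_j))_{j=1}^M)$, with $y^{(k)}_0=y_n$, output $y_{n+1}=y^{(K)}_M$. Viewed as an RK method, the stages are the values $y^{(k)}_m$, $k=0,\dots,K$, $m=1,\dots,M$. A RK method is stiffly accurate if $b^T$ equals the last row of $A$. $\tilde S_{ij}=\int_0^{i/M}\ell_j(s)\,ds$ where $\ell_j$ are the Lagrange basis polynomials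 of degree $M-1$ for the nodes $1/M,2/M,\dots,1$. *)

theory Defs
  imports "HOL-Analysis.Analysis"
begin

definition lagrange_basis :: "nat \<Rightarrow> (nat \<Rightarrow> real) \<Rightarrow> nat \<Rightarrow> real \<Rightarrow> real" where
  "lagrange_basis M x j t = (\<Prod>i\<in>{1..M} - {j}. (t - x i) / (x j - x i))"

definition indc_S :: "nat \<Rightarrow> real \<Rightarrow> real \<Rightarrow> nat \<Rightarrow> (nat \<Rightarrow> 'a::real_vector) \<Rightarrow> 'a" where
  "indc_S M tn H m w =
     (let h = H / real M; tau = (\<lambda>i. tn + real i * h) in
      (1 / h) *\<^sub>R (\<Sum>j\<in>{1..M}. integral {tau m..tau (Suc m)} (lagrange_basis M tau j) *\<^sub>R w j))"

text \<open>Y k m for k in 0..K, m in 0..M are the InDC-BE values y^(k)_m; these are the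
  defining (implicit) equations of one InDC-BE step with data y_n.\<close>
definition indc_be_step :: "nat \<Rightarrow> nat \<Rightarrow> ('a::real_vector \<Rightarrow> 'a) \<Rightarrow> real \<Rightarrow> real \<Rightarrow> 'a \<Rightarrow> (nat \<Rightarrow> nat \<Rightarrow> 'a) \<Rightarrow> bool" where
  "indc_be_step M K f tn H yn Y \<longleftrightarrow>
     (let h = H / real M in
       (\<forall>k\<le>K. Y k 0 = yn) \<and>
       (\<forall>m<M. Y 0 (Suc m) = Y 0 m + h *\<^sub>R f (Y 0 (Suc m))) \<and>
       (\<forall>k\<in>{1..K}. \<forall>m<M.
          Y k (Suc m) = Y k m + h *\<^sub>R (f (Y k (Suc m)) - f (Y (k - 1) (Suc m)))
                        + h *\<^sub>R indc_S M tn H m (\<lambda>j. f (Y (k - 1) j))))"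

text \<open>Stage numbering: the stage y^(k)_m (k = 0..K, m = 1..M) is stage number k*M + (m-1),
  so stages are indexed by 0..(K+1)M-1.  Matrices are functions nat => nat => real,
  used only on indices below the size N.\<close>

definition rk_stiffly_accurate :: "nat \<Rightarrow> (nat \<Rightarrow> nat \<Rightarrow> real) \<Rightarrow> (nat \<Rightarrow> real) \<Rightarrow> bool" where
  "rk_stiffly_accurate N A b \<longleftrightarrow> (\<forall>j<N. b j = A (N - 1) j)"

definition mat_invertible :: "nat \<Rightarrow> (nat \<Rightarrow> nat \<Rightarrow> real) \<Rightarrow> bool" where
  "mat_invertible N A \<longleftrightarrow>
     (\<exists>B :: nat \<Rightarrow> nat \<Rightarrow> real. \<forall>i<N. \<forall>j<N.
        (\<Sum>l<N. A i l * B l j) = (if i = j then 1 else 0) \<and>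
        (\<Sum>l<N. B i l * A l j) = (if i = j then 1 else 0))"

definition S_tilde :: "nat \<Rightarrow> nat \<Rightarrow> nat \<Rightarrow> real" where
  "S_tilde M i j = integral {0..real i / real M} (lagrange_basis M (\<lambda>l. real l / real M) j)"

text \<open>The 2M x 2M matrix [[T, Z], [P, T]] of the statement, with 0-based indices.\<close>
definition T_mat :: "nat \<Rightarrow> nat \<Rightarrow> nat \<Rightarrow> real" where
  "T_mat M i j = (if j \<le> i then 1 / real M else 0)"

definition P_mat :: "nat \<Rightarrow> nat \<Rightarrow> nat \<Rightarrow> real" where
  "P_mat M i j = S_tilde M (Suc i) (Suc j) - (if j \<le> i then 1 / real M else 0)"

definition block_A1 :: "nat \<Rightarrow> nat \<Rightarrow> nat \<Rightarrow> real" where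
  "block_A1 M i j =
     (if i < M then (if j < M then T_mat M i j else 0)
      else (if j < M then P_mat M (i - M) j else T_mat M (i - M) (j - M)))"

end

theory Submission
  imports Defs "Jordan_Normal_Form.Determinant"
begin

text \<open>Summing the recurrence of sweep k gives y^(k)_(m+1) = y_n + (sum of the first m+1 increments).
  The quadrature terms h S^m' telescope into integrals of the Lagrange basis over [t_n, tau_(m+1)],
  which an affine change of variables turns into H S-tilde.  Hence every stage equals y_n plus H
  times a fixed linear combination A of the f-values at the stages, where A is block lower
  bidiagonal with T on the diagonal blocks and P = S-tilde - T below them.  So A is lower
  triangular with diagonal 1/M, hence invertible, and since the output y^(K)_M is itself the last
  stage, the weights b are the last row of A.\<close>

lemma lower_triangular_mat_invertible:
  fixes A :: "nat \<Rightarrow> nat \<Rightarrow> real"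
  assumes zero_above: "\<And>i j. i < j \<Longrightarrow> j < N \<Longrightarrow> A i j = 0"
    and diag_nonzero: "\<And>i. i < N \<Longrightarrow> A i i \<noteq> 0"
  shows "mat_invertible N A"
proof -
  define Am where "Am = Matrix.mat N N (\<lambda>(i,j). A i j)"
  have Ac: "Am \<in> carrier_mat N N" unfolding Am_def by simp
  have "Determinant.det Am = prod_list (diag_mat Am)"
    by (rule det_lower_triangular[OF _ Ac]) (simp add: Am_def zero_above)
  also have "\<dots> \<noteq> 0"
    using diag_nonzero by (auto simp: prod_list_zero_iff diag_mat_def Am_def)
  finally have "Determinant.det Am \<noteq> 0" .
  from det_non_zero_imp_unit[OF Ac this, of "()"]
  obtain B where B: "B \<in> carrier_mat N N" "B * Am = 1\<^sub>m N" "Am * B = 1\<^sub>m N"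
    unfolding Units_def ring_mat_def by auto
  show ?thesis unfolding mat_invertible_def
  proof (intro exI[of _ "\<lambda>i j. B $$ (i,j)"] allI impI conjI)
    fix i j assume ij: "i < N" "j < N"
    have "(Am * B) $$ (i,j) = (\<Sum>l<N. A i l * B $$ (l, j))"
      using ij B(1) by (simp add: Am_def scalar_prod_def lessThan_atLeast0)
    then show "(\<Sum>l<N. A i l * B $$ (l, j)) = (if i = j then 1 else 0)"
      using B(3) ij by simp
    have "(B * Am) $$ (i,j) = (\<Sum>l<N. B $$ (i,l) * A l j)"
      using ij B(1) by (simp add: Am_def scalar_prod_def lessThan_atLeast0)
    then show "(\<Sum>l<N. B $$ (i, l) * A l j) = (if i = j then 1 else 0)"
      using B(2) ij by simp
  qed
qed

lemma recurrence_iff_partial_sums: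
  fixes y g :: "nat \<Rightarrow> 'a::comm_monoid_add"
  assumes "y 0 = c"
  shows "(\<forall>m<M. y (Suc m) = y m + g m) \<longleftrightarrow> (\<forall>m<M. y (Suc m) = c + (\<Sum>i\<le>m. g i))"
proof (induction M)
  case 0
  show ?case by simp
next
  case (Suc M)
  have "y M = c + (\<Sum>i<M. g i)" if "\<forall>m<M. y (Suc m) = c + (\<Sum>i\<le>m. g i)"
    using that assms by (cases M) (simp_all add: lessThan_Suc_atMost)
  with Suc.IH show ?case
    by (auto simp: less_Suc_eq lessThan_Suc_atMost[symmetric] add.assoc)
qed

lemma continuous_on_lagrange_basis: "continuous_on S (lagrange_basis M x j)"
  unfolding lagrange_basis_def divide_inverse
  by (intro continuous_intros)

lemma lagrange_basis_affine:
  assumes "H \<noteq> 0"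
  shows "lagrange_basis M (\<lambda>i. a + H * x i) j (a + H * s) = lagrange_basis M x j s"
  unfolding lagrange_basis_def
  by (rule prod.cong[OF refl]) (use assms in \<open>simp add: right_diff_distrib[symmetric]\<close>)

lemma integral_lagrange_basis_affine:
  assumes "H > 0" and "b \<ge> 0"
  shows "integral {a..a + H * b} (lagrange_basis M (\<lambda>i. a + H * x i) j)
       = H * integral {0..b} (lagrange_basis M x j)"
proof -
  let ?L = "lagrange_basis M (\<lambda>i. a + H * x i) j"
  have "((\<lambda>s. H *\<^sub>R ?L (a + H * s)) has_integral integral {a + H * 0..a + H * b} ?L) {0..b}"
    by (rule has_integral_substitution[where c = a and d = "a + H * b"])
       (use assms in \<open>auto intro!: derivative_eq_intros continuous_on_lagrange_basis\<close>)
  then have "((\<lambda>s. H * lagrange_basis M x j s) has_integral integral {a..a + H * b} ?L) {0..b}"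
    using assms by (simp add: lagrange_basis_affine)
  then show ?thesis
    by (simp add: has_integral_iff)
qed

lemma sum_integral_consecutive:
  fixes t :: "nat \<Rightarrow> real"
    and g :: "real \<Rightarrow> real"
  assumes "\<And>i. t i \<le> t (Suc i)" and "continuous_on UNIV g"
  shows "(\<Sum>i\<le>m. integral {t i..t (Suc i)} g) = integral {t 0..t (Suc m)} g"
proof (induction m)
  case 0
  show ?case by simp
next
  case (Suc m)
  have "t 0 \<le> t (Suc m)"
    using assms(1) by (induction m) (auto intro: order_trans)
  then have "integral {t 0..t (Suc m)} g + integral {t (Suc m)..t (Suc (Suc m))} g
        = integral {t 0..t (Suc (Suc m))} g"
    using assms by (intro Henstock_Kurzweil_Integration.integral_combine integrable_continuous_real
        continuous_on_subset[OF assms(2)]) auto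
  with Suc.IH show ?case by simp
qed

lemma sum_indc_S:
  assumes "H > 0" and "M \<ge> 1"
  shows "(\<Sum>i\<le>m. H / real M * indc_S M tn H i w)
     = H * (\<Sum>j<M. S_tilde M (Suc m) (Suc j) * w (Suc j))"
proof -
  define t where "t = (\<lambda>i. tn + real i * (H / real M))"
  have S: "indc_S M tn H i w
      = 1 / (H / real M) * (\<Sum>j\<in>{1..M}. integral {t i..t (Suc i)} (lagrange_basis M t j) * w j)" for i
    by (simp only: indc_S_def Let_def t_def real_scaleR_def)
  have integral_up_to_node: "integral {t 0..t (Suc m)} (lagrange_basis M t j) = H * S_tilde M (Suc m) j" for j
  proof -
    have "t = (\<lambda>i. tn + H * (real i / real M))" "t 0 = tn"
      by (auto simp: t_def)
    then show ?thesis
      unfolding S_tilde_def using assms(1)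
      by (simp only:) (rule integral_lagrange_basis_affine, simp_all)
  qed
  have "(\<Sum>i\<le>m. H / real M * indc_S M tn H i w)
      = (\<Sum>i\<le>m. \<Sum>j\<in>{1..M}. integral {t i..t (Suc i)} (lagrange_basis M t j) * w j)"
    using assms by (simp add: S)
  also have "\<dots> = (\<Sum>j\<in>{1..M}. (\<Sum>i\<le>m. integral {t i..t (Suc i)} (lagrange_basis M t j)) * w j)"
    by (subst sum.swap) (simp add: sum_distrib_right)
  also have "\<dots> = (\<Sum>j\<in>{1..M}. integral {t 0..t (Suc m)} (lagrange_basis M t j) * w j)"
    using assms
    by (subst sum_integral_consecutive) (auto simp: t_def field_simps continuous_on_lagrange_basis)
  also have "\<dots> = (\<Sum>j\<in>{1..M}. H * S_tilde M (Suc m) j * w j)"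
    using assms by (simp add: integral_up_to_node)
  also have "\<dots> = H * (\<Sum>j<M. S_tilde M (Suc m) (Suc j) * w (Suc j))"
    by (simp add: sum.atLeast1_atMost_eq sum_distrib_left mult.assoc)
  finally show ?thesis .
qed

definition indc_be_A :: "nat \<Rightarrow> nat \<Rightarrow> nat \<Rightarrow> real" where
  "indc_be_A M r c =
     (if c div M = r div M then T_mat M (r mod M) (c mod M) else 0)
   + (if 0 < r div M \<and> c div M = r div M - 1 then P_mat M (r mod M) (c mod M) else 0)"

lemma indc_be_A_stages:
  assumes "m < M" and "m' < M"
  shows "indc_be_A M (k * M + m) (k' * M + m') =
     (if k' = k then T_mat M m m' else 0) + (if 0 < k \<and> k' = k - 1 then P_mat M m m' else 0)"
  using assms by (simp add: indc_be_A_def)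

lemma sum_indc_be_A_row:
  assumes "k \<le> K" and "m < M"
  shows "(\<Sum>k'\<le>K. \<Sum>m'<M. indc_be_A M (k * M + m) (k' * M + m') * x k' m')
     = (\<Sum>m'<M. T_mat M m m' * x k m') + (if 0 < k then \<Sum>m'<M. P_mat M m m' * x (k - 1) m' else 0)"
proof -
  have "(\<Sum>k'\<le>K. \<Sum>m'<M. indc_be_A M (k * M + m) (k' * M + m') * x k' m')
      = (\<Sum>k'\<le>K. (if k' = k then \<Sum>m'<M. T_mat M m m' * x k m' else 0)
          + (if 0 < k \<and> k' = k - 1 then \<Sum>m'<M. P_mat M m m' * x (k - 1) m' else 0))"
    using assms(2) by (intro sum.cong) (auto simp: indc_be_A_stages distrib_right sum.distrib)
  also have "\<dots> = (\<Sum>m'<M. T_mat M m m' * x k m')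
      + (if 0 < k then \<Sum>m'<M. P_mat M m m' * x (k - 1) m' else 0)"
    using assms(1) by (simp add: sum.distrib)
  finally show ?thesis .
qed

lemma sum_T_mat:
  assumes "m < M"
  shows "(\<Sum>m'<M. T_mat M m m' * x m') = (\<Sum>m'\<le>m. x m') / real M"
proof -
  have "{m' \<in> {..<M}. m' \<le> m} = {..m}"
    using assms by auto
  then show ?thesis
    by (simp add: T_mat_def if_distrib[of "\<lambda>a. a * _"] sum.inter_filter[symmetric] sum_divide_distrib
        cong: if_cong)
qed

lemma P_mat_eq_S_tilde_minus_T_mat: "P_mat M i j = S_tilde M (Suc i) (Suc j) - T_mat M i j"
  by (simp add: P_mat_def T_mat_def)

lemma indc_be_A_upper_zero:
  assumes "i < j"
  shows "indc_be_A M i j = 0"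
proof -
  have "i div M \<le> j div M"
    using assms by (simp add: div_le_mono)
  moreover have "i div M = j div M \<Longrightarrow> i mod M < j mod M"
    using assms by (metis div_mult_mod_eq add_less_cancel_left)
  ultimately show ?thesis
    by (auto simp: indc_be_A_def T_mat_def)
qed

lemma indc_be_A_diagonal: "indc_be_A M i i = 1 / real M"
  by (auto simp: indc_be_A_def T_mat_def)

lemma indc_be_A_invertible:
  assumes "M \<ge> 1"
  shows "mat_invertible N (indc_be_A M)"
  using assms by (intro lower_triangular_mat_invertible) (simp_all add: indc_be_A_upper_zero indc_be_A_diagonal)

lemma indc_be_A_two_blocks:
  assumes "i < 2 * M" and "j < 2 * M"
  shows "indc_be_A M i j = block_A1 M i j"
  using assms
  by (cases "i < M"; cases "j < M")
     (simp_all add: indc_be_A_def block_A1_def T_mat_def le_div_geq le_mod_geq)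

definition indc_be_increment ::
    "nat \<Rightarrow> real \<Rightarrow> real \<Rightarrow> (real \<Rightarrow> real) \<Rightarrow> (nat \<Rightarrow> nat \<Rightarrow> real) \<Rightarrow> nat \<Rightarrow> nat \<Rightarrow> real" where
  "indc_be_increment M tn H f Y k m =
     (if k = 0 then H / real M * f (Y 0 (Suc m))
      else H / real M * (f (Y k (Suc m)) - f (Y (k - 1) (Suc m)))
        + H / real M * indc_S M tn H m (\<lambda>j. f (Y (k - 1) j)))"

lemma indc_be_step_iff_increments:
  "indc_be_step M K f tn H yn Y \<longleftrightarrow>
     (\<forall>k\<le>K. Y k 0 = yn) \<and> (\<forall>k\<le>K. \<forall>m<M. Y k (Suc m) = Y k m + indc_be_increment M tn H f Y k m)"
proof -
  have split_first: "(\<forall>k\<le>K. P k) \<longleftrightarrow> P 0 \<and> (\<forall>k\<in>{1..K}. P k)" for P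
    by (metis atLeastAtMost_iff le0 not_less_eq_eq One_nat_def le_zero_eq)
  show ?thesis
    unfolding indc_be_step_def Let_def
      split_first[where P = "\<lambda>k. \<forall>m<M. Y k (Suc m) = Y k m + indc_be_increment M tn H f Y k m"]
    by (simp add: indc_be_increment_def add.assoc)
qed

lemma sum_indc_be_increment:
  assumes "H > 0" and "M \<ge> 1" and "k \<le> K" and "m < M"
  shows "(\<Sum>i\<le>m. indc_be_increment M tn H f Y k i)
     = H * (\<Sum>k'\<le>K. \<Sum>m'<M. indc_be_A M (k * M + m) (k' * M + m') * f (Y k' (Suc m')))"
proof (cases "k = 0")
  case True
  then show ?thesis
    using assms sum_indc_be_A_row[OF assms(3,4), of "\<lambda>k' m'. f (Y k' (Suc m'))"]
    by (simp add: sum_T_mat indc_be_increment_def sum_distrib_left sum_divide_distrib)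
next
  case False
  have "(\<Sum>i\<le>m. indc_be_increment M tn H f Y k i)
      = H / real M * (\<Sum>i\<le>m. f (Y k (Suc i))) - H / real M * (\<Sum>i\<le>m. f (Y (k - 1) (Suc i)))
        + H * (\<Sum>j<M. S_tilde M (Suc m) (Suc j) * f (Y (k - 1) (Suc j)))"
    using False sum_indc_S[OF assms(1,2), where m = m and tn = tn and w = "\<lambda>j. f (Y (k - 1) j)"]
    by (simp add: indc_be_increment_def sum.distrib sum_subtractf sum_distrib_left right_diff_distrib)
  also have "\<dots> = H * ((\<Sum>m'<M. T_mat M m m' * f (Y k (Suc m')))
      + (\<Sum>m'<M. P_mat M m m' * f (Y (k - 1) (Suc m'))))"
    using assms
    by (simp add: sum_T_mat P_mat_eq_S_tilde_minus_T_mat left_diff_distrib sum_subtractf algebra_simps)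
  also have "\<dots> = H * (\<Sum>k'\<le>K. \<Sum>m'<M. indc_be_A M (k * M + m) (k' * M + m') * f (Y k' (Suc m')))"
    using False sum_indc_be_A_row[OF assms(3,4), where x = "\<lambda>k' m'. f (Y k' (Suc m'))"] by simp
  finally show ?thesis .
qed

lemma indc_be_step_iff_stage_equations:
  assumes "H > 0" and "M \<ge> 1"
  shows "indc_be_step M K f tn H yn Y \<longleftrightarrow>
     (\<forall>k\<le>K. Y k 0 = yn) \<and>
     (\<forall>k\<le>K. \<forall>m<M. Y k (Suc m) =
        yn + H * (\<Sum>k'\<le>K. \<Sum>m'<M. indc_be_A M (k * M + m) (k' * M + m') * f (Y k' (Suc m'))))"
proof -
  have "(\<forall>m<M. Y k (Suc m) = Y k m + indc_be_increment M tn H f Y k m) \<longleftrightarrow>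
     (\<forall>m<M. Y k (Suc m) =
        yn + H * (\<Sum>k'\<le>K. \<Sum>m'<M. indc_be_A M (k * M + m) (k' * M + m') * f (Y k' (Suc m'))))"
    if "Y k 0 = yn" and "k \<le> K" for k
    using recurrence_iff_partial_sums[of "Y k", OF that(1)] sum_indc_be_increment[OF assms that(2)] by simp
  then show ?thesis
    unfolding indc_be_step_iff_increments by blast
qed

lemma indc_be_step_last_stage:
  assumes "H > 0" and "M \<ge> 1" and "indc_be_step M K f tn H yn Y"
  shows "Y K M = yn + H * (\<Sum>k'\<le>K. \<Sum>m'<M. indc_be_A M ((K + 1) * M - 1) (k' * M + m') * f (Y k' (Suc m')))"
proof -
  have stages: "\<forall>k\<le>K. \<forall>m<M. Y k (Suc m) =
      yn + H * (\<Sum>k'\<le>K. \<Sum>m'<M. indc_be_A M (k * M + m) (k' * M + m') * f (Y k' (Suc m')))"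
    using assms indc_be_step_iff_stage_equations[OF assms(1,2)] by blast
  have "Y K (Suc (M - 1)) =
      yn + H * (\<Sum>k'\<le>K. \<Sum>m'<M. indc_be_A M (K * M + (M - 1)) (k' * M + m') * f (Y k' (Suc m')))"
    by (rule stages[rule_format]) (use assms(2) in auto)
  moreover have "Suc (M - 1) = M" and "K * M + (M - 1) = (K + 1) * M - 1"
    using assms(2) by simp_all
  ultimately show ?thesis
    by metis
qed

theorem proposition4p1:
  fixes M K :: nat
  assumes "M \<ge> 1"
  shows "\<exists>(A :: nat \<Rightarrow> nat \<Rightarrow> real) (b :: nat \<Rightarrow> real).
     (\<forall>(f :: real \<Rightarrow> real) tn H yn (Y :: nat \<Rightarrow> nat \<Rightarrow> real). H > 0 \<longrightarrow>
        indc_be_step M K f tn H yn Y \<longleftrightarrow>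
          ((\<forall>k\<le>K. Y k 0 = yn) \<and>
           (\<forall>k\<le>K. \<forall>m<M. Y k (Suc m) =
               yn + H * (\<Sum>k'\<le>K. \<Sum>m'<M. A (k * M + m) (k' * M + m') * f (Y k' (Suc m'))))) \<and>
        (indc_be_step M K f tn H yn Y \<longrightarrow>
           Y K M = yn + H * (\<Sum>k'\<le>K. \<Sum>m'<M. b (k' * M + m') * f (Y k' (Suc m'))))) \<and>
     rk_stiffly_accurate ((K + 1) * M) A b \<and>
     mat_invertible ((K + 1) * M) A \<and>
     (K = 1 \<longrightarrow> (\<forall>i < 2 * M. \<forall>j < 2 * M. A i j = block_A1 M i j))"
proof (intro exI[of _ "indc_be_A M"] exI[of _ "indc_be_A M ((K + 1) * M - 1)"] conjI allI impI)
  fix f :: "real \<Rightarrow> real" and tn H yn :: real and Y :: "nat \<Rightarrow> nat \<Rightarrow> real"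
  assume "H > 0"
  \<comment> \<open>\<open>\<longleftrightarrow>\<close> and \<open>\<longrightarrow>\<close> bind equally weakly, so the last-stage clause is part of the
    right-hand side of the equivalence.\<close>
  then show "indc_be_step M K f tn H yn Y \<longleftrightarrow>
      ((\<forall>k\<le>K. Y k 0 = yn) \<and>
       (\<forall>k\<le>K. \<forall>m<M. Y k (Suc m) =
          yn + H * (\<Sum>k'\<le>K. \<Sum>m'<M. indc_be_A M (k * M + m) (k' * M + m') * f (Y k' (Suc m'))))) \<and>
      (indc_be_step M K f tn H yn Y \<longrightarrow>
         Y K M = yn + H * (\<Sum>k'\<le>K. \<Sum>m'<M. indc_be_A M ((K + 1) * M - 1) (k' * M + m') * f (Y k' (Suc m'))))"
    using indc_be_step_iff_stage_equations[where K = K and f = f and tn = tn and yn = yn and Y = Y]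
      indc_be_step_last_stage[where K = K and f = f and tn = tn and yn = yn and Y = Y] assms
    by blast
next
  show "rk_stiffly_accurate ((K + 1) * M) (indc_be_A M) (indc_be_A M ((K + 1) * M - 1))"
    by (simp add: rk_stiffly_accurate_def)
  show "mat_invertible ((K + 1) * M) (indc_be_A M)"
    using assms by (rule indc_be_A_invertible)
  show "indc_be_A M i j = block_A1 M i j" if "i < 2 * M" and "j < 2 * M" for i j
    using that by (rule indc_be_A_two_blocks)
qed

end
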